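(* In the setting described in the context, there exists an open neighbourhood $U_{2,0}$ of $P_2$, relatively compact in $U_2$, such that $\widetilde{\Gamma}'_t=\{0\}\times\mathbb{Z}$ for all $t\in U_{2,0}$.
   Context: Write $\mathbf{e}(x)=\exp(2\pi\sqrt{-1}x)$. Let $\tau\in\mathbb{C}$ with $\mathrm{Im}\,\tau>0$, $X=\mathbb{C}/(\mathbb{Z}+\mathbb{Z}\tau)$, $P_1\neq P_2\in X$, and $X_{\mathfrak m}$ the curve obtained by identifying $P_1,P_2$ to an ordinary double point, $\rho:X\to X_{\mathfrak m}$. Let $\alpha,\beta$ be a canonical homology basis of $X$ (curves avoiding $P_1,P_2$), $X^\circ$ the simply connected domain obtained by cutting $X$ along them, $U_1,U_2\subset X^\circ$ small disks around $P_1,P_2$, $t$ a local coordinate on $\overline{U_2}$ with $t(P_2)=0$ (points of $U_2$ are identified with their $t$-values), and $\gamma_1$ a small anticlockwise circle around $P_1$. Let $\omega,\eta$ be the basis of the generalized differentials of $X_{\mathfrak m}$ (meromorphic 1-forms on $X$, holomorphic off $\{P_1,P_2\}$, at most simple poles there, residues summing to $0$) with $\rho^*\omega$ holomorphic and $(\int_{\gamma_1},\int_\alpha,\int_\beta)$ of $\rho^*\omega$ and $\rho^*\eta$ equal to $(0,1,\tau)$ and $(1,r_1,r_2)$, $r_1,r_2\in\mathbb{R}$. Fix $P_0\in X^\circ\setminus\{P_1,P_2\}$ and let $\varphi_1(P)=\int_{P_0}^P\rho^*\omega$, $\varphi_2(P)=\int_{P_0}^P\rho^*\eta$. Let $\theta{a\brack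 b}(z)=\sum_{n\in\mathbb{Z}}\mathbf{e}[\tfrac12(n+a)^2\tau+(n+a)(z+b)]$, $\Theta(z,w)=\theta{0\brack0}(z)+\theta{-r_1\brack r_2}(z)\mathbf{e}(w)$, and $\mathfrak{T}_c(P)=\Theta(\varphi_1(P)-c_1,\varphi_2(P)-c_2)$ for $c=(c_1,c_2)\in\mathbb{C}^2$; it has a simple pole at $P_2$. On $\overline{U_2}$ write $\mathfrak{T}_c(t)=c_{-1}/t+h_2(t;c)$ and $\mathfrak{T}_c'(t)/\mathfrak{T}_c(t)=-1/t+h_3(t;c)$ with $h_2,h_3$ holomorphic in $t$. Define $d'(t):\mathbb{C}^2\to\mathbb{C}^2$ by $d'(t)(c)=(c_1,\frac{1}{2\pi\sqrt{-1}}h_3(t;c))$ and its period group $\widetilde{\Gamma}'_t=\{\tilde c\in\mathbb{C}^2: d'(t)(c+\tilde c)=d'(t)(c)\text{ for all }c\in\mathbb{C}^2\}$. *)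

theory Defs
  imports "HOL-Complex_Analysis.Complex_Analysis"
begin

text \<open>Concrete model: the universal cover C of X = C/(Z + Z tau), coordinates
  normalised so that the pullback of omega is dz.  Points of X are represented
  by their lifts; the cut domain X-circ is represented by a lift D in C.\<close>

definition ee :: "complex \<Rightarrow> complex" where
  "ee x = exp (2 * of_real pi * \<i> * x)"

definition lattice :: "complex \<Rightarrow> complex set" where
  "lattice \<tau> = {of_int m + of_int n * \<tau> | m n. True}"

definition pole_set :: "complex \<Rightarrow> complex \<Rightarrow> complex \<Rightarrow> complex set" where
  "pole_set \<tau> p1 p2 = {p1 + l | l. l \<in> lattice \<tau>} \<union> {p2 + l | l. l \<in> lattice \<tau>}"

definition cut_set :: "complex \<Rightarrow> (real \<Rightarrow> complex) \<Rightarrow> (real \<Rightarrow> complex) \<Rightarrow> complex set" where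
  "cut_set \<tau> \<alpha> \<beta> = {l + z | l z. l \<in> lattice \<tau> \<and> z \<in> path_image \<alpha> \<union> path_image \<beta>}"

definition theta_char :: "complex \<Rightarrow> complex \<Rightarrow> complex \<Rightarrow> complex \<Rightarrow> complex" where
  "theta_char \<tau> a b z =
     infsum (\<lambda>n::int. ee ((1/2) * (of_int n + a)^2 * \<tau> + (of_int n + a) * (z + b))) UNIV"

definition Theta :: "complex \<Rightarrow> real \<Rightarrow> real \<Rightarrow> complex \<Rightarrow> complex \<Rightarrow> complex" where
  "Theta \<tau> r1 r2 z w = theta_char \<tau> 0 0 z + theta_char \<tau> (- of_real r1) (of_real r2) z * ee w"

text \<open>phi2(P) = integral of rho^* eta from P0 to P along a path in X-circ minus the poles
  (well defined modulo Z; Theta only depends on ee of its second argument).\<close>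
definition phi2 :: "(complex \<Rightarrow> complex) \<Rightarrow> complex set \<Rightarrow> complex \<Rightarrow> complex \<Rightarrow> complex" where
  "phi2 g S p0 z = (SOME v. \<exists>\<gamma>. valid_path \<gamma> \<and> pathstart \<gamma> = p0 \<and> pathfinish \<gamma> = z \<and>
                       path_image \<gamma> \<subseteq> S \<and> (g has_contour_integral v) \<gamma>)"

text \<open>frak T_c(P) = Theta(phi1(P) - c1, phi2(P) - c2), with phi1(P) = P - P0 (integral of dz).\<close>
definition frakT :: "complex \<Rightarrow> real \<Rightarrow> real \<Rightarrow> (complex \<Rightarrow> complex) \<Rightarrow> complex set \<Rightarrow> complex
      \<Rightarrow> complex \<times> complex \<Rightarrow> complex \<Rightarrow> complex" where
  "frakT \<tau> r1 r2 g S p0 c z = Theta \<tau> r1 r2 (z - p0 - fst c) (phi2 g S p0 z - snd c)"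

text \<open>h3(s; c) = T_c'(s)/T_c(s) + 1/s in the local coordinate t (inverse of t on K);
  at s = 0 defined as the limit (removable singularity).\<close>
definition h3 :: "complex \<Rightarrow> real \<Rightarrow> real \<Rightarrow> (complex \<Rightarrow> complex) \<Rightarrow> complex set \<Rightarrow> complex
      \<Rightarrow> (complex \<Rightarrow> complex) \<Rightarrow> complex set \<Rightarrow> complex \<times> complex \<Rightarrow> complex \<Rightarrow> complex" where
  "h3 \<tau> r1 r2 g S p0 t K c s =
     (let Tt = (\<lambda>y. frakT \<tau> r1 r2 g S p0 c (inv_into K t y));
          F = (\<lambda>x. deriv Tt x / Tt x + 1 / x)
      in if s = 0 then Lim (at 0) F else F s)"

definition dprime :: "complex \<Rightarrow> real \<Rightarrow> real \<Rightarrow> (complex \<Rightarrow> complex) \<Rightarrow> complex set \<Rightarrow> complex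
      \<Rightarrow> (complex \<Rightarrow> complex) \<Rightarrow> complex set \<Rightarrow> complex \<Rightarrow> complex \<times> complex \<Rightarrow> complex \<times> complex" where
  "dprime \<tau> r1 r2 g S p0 t K s c =
     (fst c, h3 \<tau> r1 r2 g S p0 t K c s / (2 * of_real pi * \<i>))"

definition period_group :: "complex \<Rightarrow> real \<Rightarrow> real \<Rightarrow> (complex \<Rightarrow> complex) \<Rightarrow> complex set \<Rightarrow> complex
      \<Rightarrow> (complex \<Rightarrow> complex) \<Rightarrow> complex set \<Rightarrow> complex \<Rightarrow> (complex \<times> complex) set" where
  "period_group \<tau> r1 r2 g S p0 t K s =
     {ct. \<forall>c. dprime \<tau> r1 r2 g S p0 t K s (fst c + fst ct, snd c + snd ct)
             = dprime \<tau> r1 r2 g S p0 t K s c}"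

end

theory Submission
  imports Defs
begin

text \<open>Near \<open>P2\<close>, in the chart \<open>t\<close>, one has \<open>frakT_c = A + u B\<close> with \<open>u = ee (- c2)\<close>,
  \<open>A = theta00 (z - P0 - c1)\<close> and \<open>B = theta[-r1; r2] (z - P0 - c1) ee (phi2 z)\<close>. Hence \<open>h3\<close>
  depends on \<open>c2\<close> only through \<open>u\<close>, which puts \<open>{0} \<times> \<int>\<close> into the period group. Conversely,
  at \<open>P \<noteq> P2\<close> the logarithmic derivative \<open>(A' + u B') / (A + u B)\<close> is a nonconstant Moebius
  function of \<open>u\<close> as soon as \<open>A' B - A B' \<noteq> 0\<close>; for a suitable \<open>c1\<close> this Wronskian is
  \<open>ee (phi2 P)\<close> times \<open>theta00' theta - theta00 theta' - 2 \<pi> i g(P) theta00 theta\<close>, which cannot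
  vanish identically for \<open>g(P) \<noteq> 0\<close> because the multipliers of the two theta functions under
  \<open>w \<mapsto> w + 1, w + \<tau>\<close> differ by a real character. Near the pole \<open>P2\<close> of \<open>g\<close> indeed \<open>g \<noteq> 0\<close>.
  At \<open>P2\<close> itself \<open>frakT_c\<close> has a simple pole, and the limit defining \<open>h3\<close> is
  \<open>A(0) / (u \<beta>(0)) + \<beta>'(0) / \<beta>(0)\<close>, again nonconstant in \<open>u\<close>.\<close>

section \<open>The exponential \<open>ee\<close>\<close>

lemma ee_add: "ee (x + y) = ee x * ee y"
  unfolding ee_def by (simp add: distrib_left exp_add)

lemma ee_nonzero [simp]: "ee x \<noteq> 0"
  unfolding ee_def by simp

lemma ee_minus: "ee (- x) = inverse (ee x)"
  unfolding ee_def by (simp add: exp_minus)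

lemma ee_eq_1_iff: "ee x = 1 \<longleftrightarrow> x \<in> \<int>"
proof
  assume "ee x = 1"
  then have "exp (2 * of_real pi * \<i> * x) = exp 0"
    unfolding ee_def by simp
  then obtain n :: int where "2 * of_real pi * \<i> * x = 0 + (of_int (2 * n) * pi) * \<i>"
    unfolding exp_eq by blast
  then have "x = of_int n"
    by (simp add: field_simps)
  then show "x \<in> \<int>"
    by simp
next
  assume "x \<in> \<int>"
  then obtain k where k: "x = of_int k"
    by (auto elim: Ints_cases)
  have "exp (2 * of_real pi * \<i> * x) = exp 0"
    unfolding exp_eq k by (rule exI[of _ k]) (simp add: algebra_simps)
  then show "ee x = 1"
    unfolding ee_def by simp
qed

lemma ee_0 [simp]: "ee 0 = 1"
  unfolding ee_def by simp

lemma ee_of_int [simp]: "ee (of_int n) = 1"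
  by (simp add: ee_eq_1_iff)

lemma ee_add_Ints: "k \<in> \<int> \<Longrightarrow> ee (x + k) = ee x"
  by (simp add: ee_add ee_eq_1_iff)

lemma ee_diff_Ints: "k \<in> \<int> \<Longrightarrow> ee (x - k) = ee x"
  using ee_add_Ints[of "- k" x] by simp

lemma ee_of_nat_mult: "ee (of_nat k * w) = ee w ^ k"
  unfolding ee_def using exp_of_nat_mult[of k "2 * of_real pi * \<i> * w"]
  by (simp add: algebra_simps)

lemma norm_ee: "norm (ee x) = exp (- 2 * pi * Im x)"
  unfolding ee_def by simp

lemma ee_Ln: "z \<noteq> 0 \<Longrightarrow> ee (Ln z / (2 * of_real pi * \<i>)) = z"
  unfolding ee_def by simp

lemma has_field_derivative_ee: "(ee has_field_derivative 2 * of_real pi * \<i> * ee x) (at x)"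
  unfolding ee_def by (auto intro!: derivative_eq_intros)

lemma holomorphic_on_ee [holomorphic_intros]:
  "f holomorphic_on A \<Longrightarrow> (\<lambda>z. ee (f z)) holomorphic_on A"
  unfolding ee_def by (intro holomorphic_intros)

section \<open>Theta functions\<close>

lemma theta_char_plus_1: "theta_char \<tau> a b (w + 1) = ee a * theta_char \<tau> a b w"
proof -
  have "ee ((1/2) * (of_int n + a)^2 * \<tau> + (of_int n + a) * ((w + 1) + b)) =
        ee a * ee ((1/2) * (of_int n + a)^2 * \<tau> + (of_int n + a) * (w + b))" for n :: int
  proof -
    have "(1/2) * (of_int n + a)^2 * \<tau> + (of_int n + a) * ((w + 1) + b) =
          a + ((1/2) * (of_int n + a)^2 * \<tau> + (of_int n + a) * (w + b)) + of_int n"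
      by (simp add: algebra_simps)
    then show ?thesis
      by (simp add: ee_add)
  qed
  then show ?thesis
    unfolding theta_char_def by (simp add: infsum_cmult_right')
qed

lemma theta_char_plus_tau:
  "theta_char \<tau> a b (w + \<tau>) = ee (- \<tau>/2 - w - b) * theta_char \<tau> a b w"
proof -
  let ?summand = "\<lambda>n::int. ee ((1/2) * (of_int n + a)^2 * \<tau> + (of_int n + a) * (w + b))"
  have "ee ((1/2) * (of_int n + a)^2 * \<tau> + (of_int n + a) * ((w + \<tau>) + b)) =
        ee (- \<tau>/2 - w - b) * ?summand (n + 1)" for n :: int
  proof -
    have "(1/2) * (of_int n + a)^2 * \<tau> + (of_int n + a) * ((w + \<tau>) + b) =
          (- \<tau>/2 - w - b) + ((1/2) * (of_int (n+1) + a)^2 * \<tau> + (of_int (n+1) + a) * (w + b))"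
      by (simp add: algebra_simps power2_eq_square)
    then show ?thesis
      by (simp only: ee_add)
  qed
  then have "theta_char \<tau> a b (w + \<tau>) = ee (- \<tau>/2 - w - b) * infsum (\<lambda>n. ?summand (n + 1)) UNIV"
    unfolding theta_char_def by (simp add: infsum_cmult_right')
  also have "infsum (\<lambda>n. ?summand (n + 1)) UNIV = theta_char \<tau> a b w"
  proof -
    have "bij_betw (\<lambda>n::int. n + 1) UNIV UNIV"
      by (auto simp: bij_betw_def inj_on_def image_def intro: exI[of _ "_ - 1"])
    from infsum_reindex_bij_betw[OF this, of ?summand] show ?thesis
      unfolding theta_char_def by simp
  qed
  finally show ?thesis .
qed

lemma theta_char_eq_shift:
  "theta_char \<tau> a b w = ee (a^2 * \<tau> / 2 + a * (w + b)) * theta_char \<tau> 0 0 (w + a * \<tau> + b)"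
proof -
  have "ee ((1/2) * (of_int n + a)^2 * \<tau> + (of_int n + a) * (w + b)) =
        ee (a^2 * \<tau> / 2 + a * (w + b)) *
        ee ((1/2) * (of_int n + 0)^2 * \<tau> + (of_int n + 0) * ((w + a * \<tau> + b) + 0))" for n :: int
  proof -
    have "(1/2) * (of_int n + a)^2 * \<tau> + (of_int n + a) * (w + b) =
          (a^2 * \<tau> / 2 + a * (w + b)) +
          ((1/2) * (of_int n + 0)^2 * \<tau> + (of_int n + 0) * ((w + a * \<tau> + b) + 0))"
      by (simp add: algebra_simps power2_eq_square)
    then show ?thesis
      by (simp only: ee_add)
  qed
  then show ?thesis
    unfolding theta_char_def by (simp add: infsum_cmult_right')
qed

definition theta_powser :: "complex \<Rightarrow> complex \<Rightarrow> complex" where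
  "theta_powser \<tau> z = (\<Sum>k. ee ((1/2) * (of_nat k)^2 * \<tau>) * z^k)"

lemma theta_powser_summable_norm:
  assumes "Im \<tau> > 0"
  shows "summable (\<lambda>k. norm (ee ((1/2) * (of_nat k)^2 * \<tau>) * z^k))"
proof -
  define q where "q = exp (- pi * Im \<tau>)"
  have "q < 1"
    using assms by (simp add: q_def)
  then have "(\<lambda>k. q ^ k * norm z) \<longlonglongrightarrow> 0 * norm z"
    by (intro tendsto_mult LIMSEQ_power_zero) (auto simp: q_def)
  then have "eventually (\<lambda>k. q ^ k * norm z < 1/2) sequentially"
    by (intro order_tendstoD) auto
  then obtain N where N: "\<And>k. k \<ge> N \<Longrightarrow> q ^ k * norm z < 1/2"
    by (auto simp: eventually_sequentially)
  have norm_summand: "norm (ee ((1/2) * (of_nat k)^2 * \<tau>) * z^k) = (q ^ k * norm z) ^ k" for k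
  proof -
    have "norm (ee ((1/2) * (of_nat k)^2 * \<tau>)) = exp (- pi * Im \<tau> * real k * real k)"
      by (simp add: norm_ee power2_eq_square algebra_simps)
    also have "\<dots> = (q ^ k) ^ k"
      by (simp add: q_def exp_of_nat_mult[symmetric] power_mult[symmetric] algebra_simps)
    finally show ?thesis
      by (simp add: norm_mult norm_power power_mult_distrib)
  qed
  show ?thesis
  proof (rule summable_comparison_test')
    show "summable (\<lambda>k. (1/2::real) ^ k)"
      by (rule summable_geometric) simp
    fix k assume "k \<ge> N"
    then have "q ^ k * norm z < 1/2"
      by (rule N)
    then have "(q ^ k * norm z) ^ k \<le> (1/2) ^ k"
      by (intro power_mono) (auto simp: q_def)
    then show "norm (norm (ee ((1/2) * (of_nat k)^2 * \<tau>) * z^k)) \<le> (1/2) ^ k"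
      by (simp only: real_norm_def abs_norm_cancel) (simp only: norm_summand)
  qed
qed

lemma theta_powser_has_sum:
  assumes "Im \<tau> > 0"
  shows "((\<lambda>k. ee ((1/2) * (of_nat k)^2 * \<tau>) * z^k) has_sum theta_powser \<tau> z) UNIV"
proof -
  note summable_norm = theta_powser_summable_norm[OF assms, of z]
  show ?thesis
    unfolding theta_powser_def
    by (rule norm_summable_imp_has_sum[OF summable_norm summable_sums[OF summable_norm_cancel[OF summable_norm]]])
qed

lemma holomorphic_theta_powser:
  assumes "Im \<tau> > 0"
  shows "theta_powser \<tau> holomorphic_on UNIV"
proof -
  have "summable (\<lambda>k. ee ((1/2) * (of_nat k)^2 * \<tau>) * z^k)" for z
    by (rule summable_norm_cancel[OF theta_powser_summable_norm[OF assms]])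
  then have "(theta_powser \<tau> has_field_derivative
      (\<Sum>n. diffs (\<lambda>k. ee ((1/2) * (of_nat k)^2 * \<tau>)) n * z^n)) (at z)" for z
    unfolding theta_powser_def[abs_def] by (rule termdiffs_strong_converges_everywhere)
  then show ?thesis
    unfolding holomorphic_on_open[OF open_UNIV] by blast
qed

lemma theta_powser_0 [simp]: "theta_powser \<tau> 0 = 1"
  unfolding theta_powser_def using powser_zero[of "\<lambda>k. ee ((1/2) * (of_nat k)^2 * \<tau>)"]
  by (simp add: ee_def)

lemma has_sum_int_from_nat_halves:
  fixes f :: "int \<Rightarrow> 'a::topological_ab_group_add"
  assumes "((\<lambda>n. f (int n)) has_sum a) UNIV" and "((\<lambda>n. f (- int n)) has_sum b) UNIV"
  shows "(f has_sum (a + b - f 0)) UNIV"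
proof -
  have nonneg: "(f has_sum a) (range int)"
    using assms(1) has_sum_reindex[of int UNIV f] by (simp add: o_def)
  have "(f has_sum b) (range (\<lambda>n. - int n))"
    using assms(2) has_sum_reindex[of "\<lambda>n. - int n" UNIV f] by (simp add: o_def inj_on_def)
  then have neg: "(f has_sum (b - f 0)) (range (\<lambda>n. - int n) - {0})"
    by (rule has_sum_Diff) (auto intro: has_sum_finiteI)
  have "range int \<inter> (range (\<lambda>n. - int n) - {0}) = {}"
    by auto
  moreover have "range int \<union> (range (\<lambda>n. - int n) - {0}) = UNIV"
  proof -
    have "n \<in> range int \<or> n \<in> range (\<lambda>n. - int n)" for n :: int
    proof (cases "n \<ge> 0")
      case True
      then have "n = int (nat n)"
        by simp
      then show ?thesis
        by blast
    next
      case False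
      then have "n = - int (nat (- n))"
        by simp
      then show ?thesis
        by blast
    qed
    then show ?thesis
      by auto
  qed
  ultimately show ?thesis
    using has_sum_Un_disjoint[OF nonneg neg] by (simp add: add_diff_eq)
qed

lemma theta_char_00_eq_powser:
  assumes "Im \<tau> > 0"
  shows "theta_char \<tau> 0 0 w = theta_powser \<tau> (ee w) + theta_powser \<tau> (ee (- w)) - 1"
proof -
  define summand where
    "summand = (\<lambda>n::int. ee ((1/2) * (of_int n + 0)^2 * \<tau> + (of_int n + 0) * (w + 0)))"
  have "(\<lambda>k. summand (int k)) = (\<lambda>k. ee ((1/2) * (of_nat k)^2 * \<tau>) * ee w ^ k)"
    by (simp add: summand_def ee_add flip: ee_of_nat_mult)
  then have nonneg: "((\<lambda>k. summand (int k)) has_sum theta_powser \<tau> (ee w)) UNIV"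
    by (simp only: theta_powser_has_sum[OF assms])
  have "(\<lambda>k. summand (- int k)) = (\<lambda>k. ee ((1/2) * (of_nat k)^2 * \<tau>) * ee (- w) ^ k)"
    by (simp add: summand_def ee_add flip: ee_of_nat_mult)
  then have nonpos: "((\<lambda>k. summand (- int k)) has_sum theta_powser \<tau> (ee (- w))) UNIV"
    by (simp only: theta_powser_has_sum[OF assms])
  have "summand 0 = 1"
    by (simp add: summand_def)
  with has_sum_int_from_nat_halves[OF nonneg nonpos] show ?thesis
    unfolding theta_char_def summand_def[symmetric] by (simp add: infsumI)
qed

lemma holomorphic_on_compose_entire:
  assumes "h holomorphic_on UNIV" and "f holomorphic_on A"
  shows "(\<lambda>z. h (f z)) holomorphic_on A"
  using holomorphic_on_compose[OF assms(2) holomorphic_on_subset[OF assms(1)]] by (simp add: o_def)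

lemma holomorphic_theta_char_00:
  assumes "Im \<tau> > 0"
  shows "theta_char \<tau> 0 0 holomorphic_on UNIV"
proof -
  have "theta_char \<tau> 0 0 = (\<lambda>w. theta_powser \<tau> (ee w) + theta_powser \<tau> (ee (- w)) - 1)"
    by (rule ext) (rule theta_char_00_eq_powser[OF assms])
  then show ?thesis
    by (simp add: holomorphic_intros holomorphic_on_compose_entire[OF holomorphic_theta_powser[OF assms]])
qed

lemma holomorphic_theta_char:
  assumes "Im \<tau> > 0"
  shows "theta_char \<tau> a b holomorphic_on UNIV"
proof -
  have "theta_char \<tau> a b = (\<lambda>w. ee (a^2 * \<tau> / 2 + a * (w + b)) * theta_char \<tau> 0 0 (w + a * \<tau> + b))"
    by (rule ext) (rule theta_char_eq_shift)
  then show ?thesis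
    by (simp add: holomorphic_intros holomorphic_on_compose_entire[OF holomorphic_theta_char_00[OF assms]])
qed

text \<open>By the power series expansion, \<open>theta_char \<tau> 0 0 \<equiv> 0\<close> would make \<open>theta_powser \<tau> z\<close>
  tend to \<open>1 - theta_powser \<tau> 0 = 0\<close> at infinity; Liouville then contradicts
  \<open>theta_powser \<tau> 0 = 1\<close>.\<close>
lemma theta_char_00_not_identically_zero:
  assumes "Im \<tau> > 0"
  obtains w where "theta_char \<tau> 0 0 w \<noteq> 0"
proof (rule ccontr)
  assume "\<not> thesis"
  with that have zero: "theta_char \<tau> 0 0 w = 0" for w
    by blast
  have "theta_powser \<tau> z = 1 - theta_powser \<tau> (inverse z)" if "z \<noteq> 0" for z
    using zero[of "Ln z / (2 * of_real pi * \<i>)"] that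
    by (simp add: theta_char_00_eq_powser[OF assms] ee_Ln ee_minus eq_diff_eq)
  then have "eventually (\<lambda>z. 1 - theta_powser \<tau> (inverse z) = theta_powser \<tau> z) at_infinity"
    unfolding eventually_at_infinity by (metis norm_zero not_one_le_zero)
  moreover have "((\<lambda>z. 1 - theta_powser \<tau> (inverse z)) \<longlongrightarrow> 1 - theta_powser \<tau> 0) at_infinity"
    using holomorphic_theta_powser[OF assms]
    by (intro tendsto_diff tendsto_const isCont_tendsto_compose[OF _ tendsto_inverse_0])
       (meson holomorphic_on_imp_continuous_on continuous_on_eq_continuous_at open_UNIV UNIV_I)
  ultimately have "(theta_powser \<tau> \<longlongrightarrow> 0) at_infinity"
    by (simp add: Lim_transform_eventually)
  then have "theta_powser \<tau> 0 = 0"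
    by (rule Liouville_weak_0[OF holomorphic_theta_powser[OF assms]])
  then show False
    by simp
qed

lemma theta_char_not_identically_zero:
  assumes "Im \<tau> > 0"
  obtains w where "theta_char \<tau> a b w \<noteq> 0"
proof -
  obtain w0 where "theta_char \<tau> 0 0 w0 \<noteq> 0"
    using theta_char_00_not_identically_zero[OF assms] .
  then have "theta_char \<tau> a b (w0 - a * \<tau> - b) \<noteq> 0"
    by (simp add: theta_char_eq_shift[of \<tau> a b "w0 - a * \<tau> - b"])
  then show ?thesis
    using that by blast
qed

lemma theta_char_common_nonzero:
  assumes "Im \<tau> > 0"
  obtains w where "theta_char \<tau> 0 0 w \<noteq> 0" "theta_char \<tau> a b w \<noteq> 0"
proof -
  have "\<exists>w. theta_char \<tau> 0 0 w \<noteq> 0 \<and> theta_char \<tau> a b w \<noteq> 0"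
  proof (rule ccontr)
    assume "\<nexists>w. theta_char \<tau> 0 0 w \<noteq> 0 \<and> theta_char \<tau> a b w \<noteq> 0"
    then have vanish: "theta_char \<tau> a b w = 0" if "theta_char \<tau> 0 0 w \<noteq> 0" for w
      using that by blast
    obtain w1 where w1: "theta_char \<tau> 0 0 w1 \<noteq> 0"
      using theta_char_00_not_identically_zero[OF assms] .
    have "isCont (theta_char \<tau> 0 0) w1"
      using holomorphic_theta_char_00[OF assms]
      by (meson holomorphic_on_imp_continuous_on continuous_on_eq_continuous_at open_UNIV UNIV_I)
    then obtain r where r: "r > 0" "\<And>y. dist w1 y < r \<Longrightarrow> theta_char \<tau> 0 0 y \<noteq> 0"
      using continuous_at_avoid[of w1 "theta_char \<tau> 0 0" 0] w1 by blast
    have "theta_char \<tau> a b w = 0" for w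
      using analytic_continuation_open[of "ball w1 r" UNIV "theta_char \<tau> a b" "\<lambda>_. 0"]
        r vanish holomorphic_theta_char[OF assms] by auto
    moreover obtain w where "theta_char \<tau> a b w \<noteq> 0"
      using theta_char_not_identically_zero[OF assms] .
    ultimately show False
      by simp
  qed
  then show ?thesis
    using that by blast
qed

lemma entire_has_field_derivative:
  assumes "F holomorphic_on UNIV"
  shows "(F has_field_derivative deriv F w) (at w)"
  using holomorphic_derivI[OF assms open_UNIV, of w UNIV] by simp

lemma entire_proportional_if_wronskian_zero:
  fixes F H :: "complex \<Rightarrow> complex"
  assumes F: "F holomorphic_on UNIV" and H: "H holomorphic_on UNIV"
    and wronskian: "\<And>w. deriv F w * H w - F w * deriv H w = 0"
    and "H w0 \<noteq> 0"
  obtains C where "\<And>w. F w = C * H w"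
proof -
  have "isCont H w0"
    using H by (meson holomorphic_on_imp_continuous_on continuous_on_eq_continuous_at open_UNIV UNIV_I)
  then obtain r where r: "r > 0" "\<And>y. dist w0 y < r \<Longrightarrow> H y \<noteq> 0"
    using continuous_at_avoid[of w0 H 0] \<open>H w0 \<noteq> 0\<close> by blast
  have "\<exists>C. \<forall>x\<in>ball w0 r. F x / H x = C"
  proof (rule has_field_derivative_zero_constant)
    fix x assume "x \<in> ball w0 r"
    then have "H x \<noteq> 0"
      using r by (simp add: dist_commute)
    from DERIV_divide[OF entire_has_field_derivative[OF F] entire_has_field_derivative[OF H] this]
    show "((\<lambda>x. F x / H x) has_field_derivative 0) (at x within ball w0 r)"
      using wronskian[of x] by (simp add: has_field_derivative_at_within)
  qed simp
  then obtain C where C: "\<And>x. x \<in> ball w0 r \<Longrightarrow> F x / H x = C"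
    by blast
  have on_ball: "F x = C * H x" if "x \<in> ball w0 r" for x
    using C[OF that] r that by (simp add: dist_commute field_simps)
  have "F w = C * H w" for w
    by (rule analytic_continuation_open[of "ball w0 r" UNIV F "\<lambda>w. C * H w"])
      (use r F H on_ball in \<open>auto intro: holomorphic_intros\<close>)
  then show ?thesis
    using that by blast
qed

lemma exponential_multipliers_trivial:
  fixes ra rb :: real
  assumes tau: "Im \<tau> > 0"
    and mult_1: "exp (- G) = ee (of_real ra)" and mult_tau: "exp (- G * \<tau>) = ee (- of_real rb)"
  shows "G = 0"
proof -
  obtain n :: int where n: "- G = 2 * of_real pi * \<i> * of_real ra + of_int (2 * n) * pi * \<i>"
    using mult_1 unfolding ee_def exp_eq by blast
  obtain m :: int where m: "- G * \<tau> = 2 * of_real pi * \<i> * (- of_real rb) + of_int (2 * m) * pi * \<i>"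
    using mult_tau unfolding ee_def exp_eq by blast
  have G: "- G = 2 * of_real pi * \<i> * (of_real ra + of_int n)"
    using n by (simp add: algebra_simps)
  then have "2 * of_real pi * \<i> * (of_real ra + of_int n) * \<tau> =
      2 * of_real pi * \<i> * (of_int m - of_real rb)"
    using m by (simp add: algebra_simps)
  then have "Im ((of_real ra + of_int n) * \<tau>) = Im (of_int m - of_real rb)"
    by simp
  then have "ra + n = 0"
    using tau by simp
  then have "(of_real ra + of_int n :: complex) = 0"
    by (metis of_real_0 of_real_add of_real_of_int_eq)
  then show ?thesis
    using G by simp
qed

text \<open>The quasi-periodicity of the two theta functions rules out that \<open>h / f\<close> solves
  \<open>(h / f)' = - G * (h / f)\<close> for \<open>G \<noteq> 0\<close>.\<close>
lemma theta_wronskian_nonzero: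
  fixes ra rb :: real
  assumes tau: "Im \<tau> > 0" and "G \<noteq> 0"
  defines "f \<equiv> theta_char \<tau> 0 0" and "h \<equiv> theta_char \<tau> (of_real ra) (of_real rb)"
  obtains w where "deriv f w * h w - f w * deriv h w - G * f w * h w \<noteq> 0"
proof (rule ccontr)
  assume "\<not> thesis"
  with that have wronskian: "deriv f w * h w - f w * deriv h w - G * f w * h w = 0" for w
    by blast
  have f: "f holomorphic_on UNIV" and h: "h holomorphic_on UNIV"
    unfolding f_def h_def by (intro holomorphic_theta_char_00 holomorphic_theta_char tau)+
  define F where "F = (\<lambda>w. f w * exp (- G * w))"
  have F: "F holomorphic_on UNIV"
    unfolding F_def by (intro holomorphic_intros f)
  have deriv_F: "deriv F w = deriv f w * exp (- G * w) - G * f w * exp (- G * w)" for w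
    unfolding F_def
    by (rule DERIV_imp_deriv, (rule derivative_eq_intros entire_has_field_derivative[OF f] refl | simp)+)
  have "deriv F w * h w - F w * deriv h w =
      exp (- G * w) * (deriv f w * h w - f w * deriv h w - G * f w * h w)" for w
    unfolding deriv_F by (simp add: F_def algebra_simps)
  then have "deriv F w * h w - F w * deriv h w = 0" for w
    by (simp add: wronskian)
  moreover obtain w0 where "h w0 \<noteq> 0"
    unfolding h_def using theta_char_not_identically_zero[OF tau] .
  ultimately obtain C where C: "\<And>w. F w = C * h w"
    using entire_proportional_if_wronskian_zero[OF F h] by blast
  obtain w1 where w1: "f w1 \<noteq> 0"
    unfolding f_def using theta_char_00_not_identically_zero[OF tau] .
  have "F w1 \<noteq> 0"
    unfolding F_def using w1 by simp
  have "exp (- G) = ee (of_real ra)"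
  proof -
    have "exp (- G) * F w1 = F (w1 + 1)"
      unfolding F_def f_def using theta_char_plus_1[of \<tau> 0 0 w1]
      by (simp add: algebra_simps exp_add[symmetric])
    also have "\<dots> = ee (of_real ra) * F w1"
      unfolding C h_def theta_char_plus_1 by simp
    finally show ?thesis
      using \<open>F w1 \<noteq> 0\<close> by simp
  qed
  moreover have "exp (- G * \<tau>) = ee (- of_real rb)"
  proof -
    have "ee (- \<tau>/2 - w1) * exp (- G * \<tau>) * F w1 = F (w1 + \<tau>)"
      unfolding F_def f_def using theta_char_plus_tau[of \<tau> 0 0 w1]
      by (simp add: algebra_simps exp_add[symmetric])
    also have "\<dots> = ee (- \<tau>/2 - w1) * ee (- of_real rb) * F w1"
      unfolding C h_def theta_char_plus_tau by (simp add: ee_add[symmetric])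
    finally show ?thesis
      using \<open>F w1 \<noteq> 0\<close> by simp
  qed
  ultimately show False
    using exponential_multipliers_trivial[OF tau] \<open>G \<noteq> 0\<close> by blast
qed

section \<open>Tools from complex analysis\<close>

lemma closed_path_integral_in_Ints:
  fixes g :: "complex \<Rightarrow> complex"
  assumes D: "open D" "connected D" "simply_connected D"
    and "p1 \<noteq> p2"
    and g: "g holomorphic_on (D - {p1, p2})"
    and res1: "residue g p1 = 1 / (2 * of_real pi * \<i>)"
    and res2: "residue g p2 = - 1 / (2 * of_real pi * \<i>)"
    and \<gamma>: "valid_path \<gamma>" "pathfinish \<gamma> = pathstart \<gamma>" "path_image \<gamma> \<subseteq> D - {p1, p2}"
  shows "contour_integral \<gamma> g \<in> \<int>"
proof -
  have "\<forall>z. z \<notin> D \<longrightarrow> winding_number \<gamma> z = 0"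
    using simply_connected_imp_winding_number_zero[OF D(3) valid_path_imp_path[OF \<gamma>(1)] _ \<gamma>(2)] \<gamma>(3)
    by blast
  then have "contour_integral \<gamma> g = 2 * pi * \<i> * (\<Sum>p\<in>{p1,p2}. winding_number \<gamma> p * residue g p)"
    by (intro Residue_theorem[OF D(1,2) _ g \<gamma>]) auto
  also have "\<dots> = winding_number \<gamma> p1 - winding_number \<gamma> p2"
    using \<open>p1 \<noteq> p2\<close> by (simp add: res1 res2 field_simps)
  moreover have "winding_number \<gamma> p1 \<in> \<int>" "winding_number \<gamma> p2 \<in> \<int>"
    using integer_winding_number[OF valid_path_imp_path[OF \<gamma>(1)] \<gamma>(2)] \<gamma>(3) by auto
  ultimately show ?thesis
    by simp
qed

lemma simple_pole_regular_part:
  assumes "r > 0" and g: "g holomorphic_on ball p r - {p}"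
    and lim: "((\<lambda>z. (z - p) * g z) \<longlongrightarrow> l) (at p)"
  obtains j where "j holomorphic_on ball p r" "\<And>z. z \<in> ball p r - {p} \<Longrightarrow> g z = l / (z - p) + j z"
proof
  define m where "m = (\<lambda>z. if z = p then l else (z - p) * g z)"
  have "m holomorphic_on ball p r"
    unfolding m_def using lim by (intro removable_singularity holomorphic_intros g) auto
  then show "(\<lambda>z. if z = p then deriv m p else (m z - m p) / (z - p)) holomorphic_on ball p r"
    using \<open>r > 0\<close> by (intro pole_lemma) auto
  fix z assume "z \<in> ball p r - {p}"
  then have "z - p \<noteq> 0"
    by simp
  then show "g z = l / (z - p) + (if z = p then deriv m p else (m z - m p) / (z - p))"
    by (simp add: m_def diff_divide_distrib)
qed

text \<open>\<open>(z - p) \<psi> z\<close> is \<open>c \<cdot> exp (2 \<pi> i J)\<close> for a primitive \<open>J\<close> of the regular part of \<open>g\<close>.\<close>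
lemma solution_has_simple_pole:
  assumes "r > 0" and g: "g holomorphic_on ball p r - {p}"
    and lim: "((\<lambda>z. (z - p) * g z) \<longlongrightarrow> - 1 / (2 * of_real pi * \<i>)) (at p)"
    and \<psi>: "\<And>z. z \<in> ball p r - {p} \<Longrightarrow> (\<psi> has_field_derivative 2 * of_real pi * \<i> * g z * \<psi> z) (at z)"
    and \<psi>_nonzero: "\<And>z. z \<in> ball p r - {p} \<Longrightarrow> \<psi> z \<noteq> 0"
  obtains \<Phi> where "\<Phi> holomorphic_on ball p r" "\<And>z. z \<in> ball p r \<Longrightarrow> \<Phi> z \<noteq> 0"
    "\<And>z. z \<in> ball p r - {p} \<Longrightarrow> \<Phi> z = (z - p) * \<psi> z"
proof -
  obtain j where j: "j holomorphic_on ball p r"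
    and g_eq: "\<And>z. z \<in> ball p r - {p} \<Longrightarrow> g z = - 1 / (2 * of_real pi * \<i>) / (z - p) + j z"
    using simple_pole_regular_part[OF \<open>r > 0\<close> g lim] by blast
  obtain J where J_within: "\<And>z. z \<in> ball p r \<Longrightarrow> (J has_field_derivative j z) (at z within ball p r)"
    using holomorphic_convex_primitive'[OF convex_ball open_ball j] by blast
  have J: "(J has_field_derivative j z) (at z)" if "z \<in> ball p r" for z
    using J_within[OF that] at_within_open[OF that open_ball] by simp
  have J_holo: "J holomorphic_on ball p r"
    unfolding holomorphic_on_open[OF open_ball] using J by blast
  define H where "H = (\<lambda>z. (z - p) * \<psi> z * exp (- (2 * of_real pi * \<i>) * J z))"
  have H': "(H has_field_derivative 0) (at z)" if z: "z \<in> ball p r - {p}" for z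
  proof -
    define E where "E = exp (- (2 * of_real pi * \<i>) * J z)"
    have "(H has_field_derivative
        ((1 - 0) * \<psi> z + (2 * of_real pi * \<i> * g z * \<psi> z) * (z - p)) * E
        + (E * (- (2 * of_real pi * \<i>) * j z)) * ((z - p) * \<psi> z)) (at z)"
      unfolding H_def E_def
      by (intro DERIV_mult DERIV_diff DERIV_ident DERIV_const \<psi> DERIV_chain2[OF DERIV_exp]
          DERIV_cmult J) (use z in auto)
    moreover have "((1 - 0) * \<psi> z + (2 * of_real pi * \<i> * g z * \<psi> z) * (z - p)) * E
        + (E * (- (2 * of_real pi * \<i>) * j z)) * ((z - p) * \<psi> z)
      = E * \<psi> z * (1 + 2 * of_real pi * \<i> * g z * (z - p) - 2 * of_real pi * \<i> * j z * (z - p))"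
      by (simp add: algebra_simps)
    moreover have "1 + 2 * of_real pi * \<i> * g z * (z - p) - 2 * of_real pi * \<i> * j z * (z - p) = 0"
      using z by (simp add: g_eq field_simps)
    ultimately show ?thesis
      by (metis mult_zero_right)
  qed
  have "continuous_on (ball p r - {p}) H"
    using H' by (intro continuous_at_imp_continuous_on ballI DERIV_isCont) blast
  then obtain c where c: "\<And>z. z \<in> ball p r - {p} \<Longrightarrow> H z = c"
    using DERIV_zero_connected_constant[of "ball p r - {p}" "{}" H] connected_punctured_ball[of p r] H'
    by auto
  define z0 where "z0 = p + of_real (r/2)"
  have z0: "z0 \<in> ball p r - {p}"
    using \<open>r > 0\<close> by (auto simp: z0_def dist_norm)
  then have "c \<noteq> 0"
    using c[OF z0] \<psi>_nonzero[OF z0] by (auto simp: H_def)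
  show ?thesis
  proof
    show "(\<lambda>z. c * exp (2 * of_real pi * \<i> * J z)) holomorphic_on ball p r"
      by (intro holomorphic_intros J_holo)
    show "c * exp (2 * of_real pi * \<i> * J z) \<noteq> 0" if "z \<in> ball p r" for z
      using \<open>c \<noteq> 0\<close> by simp
    fix z assume "z \<in> ball p r - {p}"
    from c[OF this] show "c * exp (2 * of_real pi * \<i> * J z) = (z - p) * \<psi> z"
      by (simp add: H_def exp_minus field_simps)
  qed
qed

lemma holomorphic_inv_into:
  assumes t: "t holomorphic_on U" and "open U" "U \<subseteq> K" "inj_on t K"
  shows "open (t ` U)" "inv_into K t holomorphic_on t ` U"
    and "\<And>y. y \<in> t ` U \<Longrightarrow> deriv (inv_into K t) y \<noteq> 0"
proof -
  have inj: "inj_on t U"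
    using \<open>inj_on t K\<close> \<open>U \<subseteq> K\<close> by (rule inj_on_subset)
  show "open (t ` U)"
    by (rule open_mapping_thm3[OF t \<open>open U\<close> inj])
  obtain s where s: "s holomorphic_on t ` U" "\<And>z. z \<in> U \<Longrightarrow> deriv t z * deriv s (t z) = 1"
    "\<And>z. z \<in> U \<Longrightarrow> s (t z) = z"
    using holomorphic_has_inverse[OF t \<open>open U\<close> inj] by blast
  have eq: "inv_into K t y = s y" if "y \<in> t ` U" for y
    using that s(3) \<open>inj_on t K\<close> \<open>U \<subseteq> K\<close> by auto
  show "inv_into K t holomorphic_on t ` U"
    using s(1) eq by (simp add: holomorphic_transform)
  show "deriv (inv_into K t) y \<noteq> 0" if y: "y \<in> t ` U" for y
  proof -
    have "eventually (\<lambda>x. x \<in> t ` U) (nhds y)"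
      using \<open>open (t ` U)\<close> y by (rule eventually_nhds_in_open)
    then have "deriv (inv_into K t) y = deriv s y"
      by (intro deriv_cong_ev refl) (auto elim: eventually_mono simp: eq)
    then show ?thesis
      using y s(2) by fastforce
  qed
qed

lemma affine_pencil_log_deriv_separates:
  fixes a b a' b' e :: complex
  assumes W: "a' * b - a * b' \<noteq> 0" and e: "e \<noteq> 0" "e \<noteq> 1"
  obtains u where "u \<noteq> 0" "(a' + u * b') / (a + u * b) \<noteq> (a' + u * e * b') / (a + u * e * b)"
proof -
  obtain u where u: "u \<notin> {0, - a / b, - a / (e * b)}"
    using ex_new_if_finite[OF infinite_UNIV_char_0, of "{0, - a / b, - a / (e * b)}"] by auto
  have den: "a + u * b \<noteq> 0 \<and> a + u * e * b \<noteq> 0"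
  proof (cases "b = 0")
    case True
    then show ?thesis
      using W by auto
  next
    case False
    have "a + u * b = 0 \<Longrightarrow> u = - a / b" "a + u * e * b = 0 \<Longrightarrow> u = - a / (e * b)"
      using False e by (simp_all add: field_simps add_eq_0_iff)
    then show ?thesis
      using u by auto
  qed
  have "(a' + u * b') / (a + u * b) \<noteq> (a' + u * e * b') / (a + u * e * b)"
  proof
    assume "(a' + u * b') / (a + u * b) = (a' + u * e * b') / (a + u * e * b)"
    then have "(a' + u * b') * (a + u * e * b) = (a' + u * e * b') * (a + u * b)"
      using den by (simp add: divide_eq_eq field_simps)
    then have "u * (e - 1) * (a' * b - a * b') = 0"
      by (simp add: algebra_simps)
    then show False
      using u e W by simp
  qed
  with u show ?thesis
    using that by blast
qed

lemma log_deriv_plus_inverse_tendsto: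
  assumes \<Omega>: "open \<Omega>" "0 \<in> \<Omega>" and N: "N holomorphic_on \<Omega>" "N 0 \<noteq> 0"
    and T: "\<And>y. y \<in> \<Omega> - {0} \<Longrightarrow> T y = N y / y"
  shows "((\<lambda>x. deriv T x / T x + 1 / x) \<longlongrightarrow> deriv N 0 / N 0) (at 0)"
proof -
  have N': "(N has_field_derivative deriv N x) (at x)" if "x \<in> \<Omega>" for x
    using holomorphic_derivI[OF N(1) \<Omega>(1) that, of UNIV] by simp
  have "continuous_on \<Omega> N" "continuous_on \<Omega> (deriv N)"
    using N(1) holomorphic_deriv[OF N(1) \<Omega>(1)] by (simp_all add: holomorphic_on_imp_continuous_on)
  then have cont: "isCont N 0" "isCont (deriv N) 0"
    using \<Omega> by (simp_all add: continuous_on_eq_continuous_at)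
  have lim: "((\<lambda>x. deriv N x / N x) \<longlongrightarrow> deriv N 0 / N 0) (at 0)"
    using tendsto_divide[OF cont(2)[unfolded isCont_def] cont(1)[unfolded isCont_def] N(2)] .
  have "eventually (\<lambda>x. x \<in> \<Omega> - {0}) (at 0)"
    using \<Omega> by (rule eventually_at_in_open)
  moreover have "eventually (\<lambda>x. N x \<noteq> 0) (at 0)"
    using cont(1) N(2) unfolding isCont_def by (rule tendsto_imp_eventually_ne)
  ultimately have "eventually (\<lambda>x. deriv N x / N x = deriv T x / T x + 1 / x) (at 0)"
  proof eventually_elim
    case (elim x)
    then have "x \<noteq> 0" "x \<in> \<Omega>"
      by auto
    have "((\<lambda>y. N y / y) has_field_derivative (deriv N x * x - N x * 1) / (x * x)) (at x)"
      by (rule DERIV_divide[OF N'[OF \<open>x \<in> \<Omega>\<close>] DERIV_ident \<open>x \<noteq> 0\<close>])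
    then have "(T has_field_derivative (deriv N x * x - N x * 1) / (x * x)) (at x)"
    proof (rule has_field_derivative_transform_within_open)
      show "open (\<Omega> - {0})" "x \<in> \<Omega> - {0}"
        using \<Omega>(1) elim by auto
      show "N y / y = T y" if "y \<in> \<Omega> - {0}" for y
        using T[OF that] by simp
    qed
    then have deriv_T: "deriv T x = (deriv N x * x - N x * 1) / (x * x)"
      by (rule DERIV_imp_deriv)
    have "T x = N x / x"
      using T elim by blast
    then show ?case
      unfolding deriv_T using elim \<open>x \<noteq> 0\<close> by (simp add: field_simps)
  qed
  then show ?thesis
    using lim by (rule Lim_transform_eventually[rotated])
qed

lemma Lim_log_deriv_at_simple_pole:
  assumes \<Omega>: "open \<Omega>" "0 \<in> \<Omega>" and A: "A holomorphic_on \<Omega>"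
    and \<beta>: "\<beta> holomorphic_on \<Omega>" "\<beta> 0 \<noteq> 0" and "u \<noteq> 0"
    and T: "\<And>y. y \<in> \<Omega> - {0} \<Longrightarrow> T y = A y + u * \<beta> y / y"
  shows "Lim (at 0) (\<lambda>x. deriv T x / T x + 1 / x) = (A 0 + u * deriv \<beta> 0) / (u * \<beta> 0)"
proof -
  define N where "N = (\<lambda>y. y * A y + u * \<beta> y)"
  have A': "(A has_field_derivative deriv A 0) (at 0)"
    using holomorphic_derivI[OF A \<Omega>, of UNIV] by simp
  have \<beta>': "(\<beta> has_field_derivative deriv \<beta> 0) (at 0)"
    using holomorphic_derivI[OF \<beta>(1) \<Omega>, of UNIV] by simp
  have "(N has_field_derivative (1 * A 0 + deriv A 0 * 0 + u * deriv \<beta> 0)) (at 0)"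
    unfolding N_def by (rule DERIV_add[OF DERIV_mult[OF DERIV_ident A'] DERIV_cmult[OF \<beta>']])
  then have "deriv N 0 = A 0 + u * deriv \<beta> 0"
    by (simp add: DERIV_imp_deriv)
  moreover have "((\<lambda>x. deriv T x / T x + 1 / x) \<longlongrightarrow> deriv N 0 / N 0) (at 0)"
  proof (rule log_deriv_plus_inverse_tendsto[OF \<Omega>])
    show "N holomorphic_on \<Omega>"
      unfolding N_def by (intro holomorphic_intros A \<beta>(1))
    show "N 0 \<noteq> 0"
      using \<open>u \<noteq> 0\<close> \<beta>(2) by (simp add: N_def)
    show "T y = N y / y" if "y \<in> \<Omega> - {0}" for y
      using T[OF that] that by (simp add: N_def field_simps)
  qed
  ultimately show ?thesis
    by (simp add: tendsto_Lim N_def)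
qed

section \<open>The functions \<open>frakT\<close> and \<open>h3\<close>\<close>

lemma lattice_closed:
  assumes "Im \<tau> > 0"
  shows "closed (lattice \<tau>)"
proof (rule discrete_imp_closed[of "min 1 (Im \<tau>)"])
  show "0 < min 1 (Im \<tau>)"
    using assms by simp
  show "\<forall>x\<in>lattice \<tau>. \<forall>y\<in>lattice \<tau>. dist y x < min 1 (Im \<tau>) \<longrightarrow> y = x"
  proof (intro ballI impI)
    fix x y assume "x \<in> lattice \<tau>" "y \<in> lattice \<tau>" and d: "dist y x < min 1 (Im \<tau>)"
    then obtain m1 n1 m2 n2 :: int
      where xy: "x = of_int m1 + of_int n1 * \<tau>" "y = of_int m2 + of_int n2 * \<tau>"
      by (auto simp: lattice_def)
    then have yx: "y - x = of_int (m2 - m1) + of_int (n2 - n1) * \<tau>"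
      by (simp add: algebra_simps)
    have "\<bar>Im (y - x)\<bar> < Im \<tau>"
      using abs_Im_le_cmod[of "y - x"] d by (simp add: dist_norm)
    then have "\<bar>real_of_int (n2 - n1)\<bar> * Im \<tau> < 1 * Im \<tau>"
      unfolding yx using assms by (simp add: abs_mult)
    then have "n2 = n1"
      using assms by (simp only: mult_less_cancel_right) linarith
    then have "norm (of_int (m2 - m1) :: complex) < 1"
      using d yx by (simp add: dist_norm)
    then have "\<bar>real_of_int (m2 - m1)\<bar> < 1"
      by (simp only: norm_of_int)
    then have "m2 = m1"
      by linarith
    then show "y = x"
      using \<open>n2 = n1\<close> xy by simp
  qed
qed

lemma cut_set_closed:
  assumes "Im \<tau> > 0" "valid_path \<alpha>" "valid_path \<beta>"
  shows "closed (cut_set \<tau> \<alpha> \<beta>)"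
proof -
  have "compact (path_image \<alpha> \<union> path_image \<beta>)"
    using assms by (intro compact_Un compact_path_image valid_path_imp_path)
  moreover have "cut_set \<tau> \<alpha> \<beta> = (\<Union>x\<in>lattice \<tau>. \<Union>y\<in>path_image \<alpha> \<union> path_image \<beta>. {x + y})"
    unfolding cut_set_def by blast
  ultimately show ?thesis
    by (metis closed_compact_sums lattice_closed[OF assms(1)])
qed

lemma phi2_has_contour_integral:
  assumes S: "open S" "connected S" and g: "g holomorphic_on S" and "p0 \<in> S" "z \<in> S"
  obtains \<gamma> where "valid_path \<gamma>" "pathstart \<gamma> = p0" "pathfinish \<gamma> = z" "path_image \<gamma> \<subseteq> S"
    "(g has_contour_integral phi2 g S p0 z) \<gamma>"
proof -
  obtain \<gamma> where \<gamma>: "polynomial_function \<gamma>" "path_image \<gamma> \<subseteq> S" "pathstart \<gamma> = p0" "pathfinish \<gamma> = z"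
    using connected_open_polynomial_connected[OF S \<open>p0 \<in> S\<close> \<open>z \<in> S\<close>] by blast
  then have "valid_path \<gamma>"
    by (simp add: valid_path_polynomial_function)
  then have "(g has_contour_integral contour_integral \<gamma> g) \<gamma>"
    using contour_integrable_holomorphic_simple[OF g S(1) _ \<gamma>(2)] has_contour_integral_integral by blast
  then have "\<exists>v \<gamma>. valid_path \<gamma> \<and> pathstart \<gamma> = p0 \<and> pathfinish \<gamma> = z \<and>
      path_image \<gamma> \<subseteq> S \<and> (g has_contour_integral v) \<gamma>"
    using \<open>valid_path \<gamma>\<close> \<gamma> by blast
  from someI_ex[OF this] show ?thesis
    using that unfolding phi2_def by blast
qed

lemma ee_phi2_eq:
  assumes S: "open S" "connected S" and g: "g holomorphic_on S" and "p0 \<in> S"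
    and periods: "\<And>\<gamma>. valid_path \<gamma> \<Longrightarrow> pathfinish \<gamma> = pathstart \<gamma> \<Longrightarrow> path_image \<gamma> \<subseteq> S
      \<Longrightarrow> contour_integral \<gamma> g \<in> \<int>"
    and \<gamma>: "valid_path \<gamma>" "pathstart \<gamma> = p0" "pathfinish \<gamma> = z" "path_image \<gamma> \<subseteq> S"
      "(g has_contour_integral v) \<gamma>"
  shows "ee (phi2 g S p0 z) = ee v"
proof -
  have "z \<in> S"
    using \<gamma>(3,4) pathfinish_in_path_image[of \<gamma>] by auto
  then obtain \<gamma>1 where \<gamma>1: "valid_path \<gamma>1" "pathstart \<gamma>1 = p0" "pathfinish \<gamma>1 = z"
    "path_image \<gamma>1 \<subseteq> S" "(g has_contour_integral phi2 g S p0 z) \<gamma>1"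
    using phi2_has_contour_integral[OF S g \<open>p0 \<in> S\<close>] by blast
  let ?loop = "\<gamma>1 +++ reversepath \<gamma>"
  have "(g has_contour_integral (phi2 g S p0 z + - v)) ?loop"
    using \<gamma> \<gamma>1 by (intro has_contour_integral_join has_contour_integral_reversepath) auto
  moreover have "contour_integral ?loop g \<in> \<int>"
    using \<gamma> \<gamma>1 by (intro periods) (auto simp: path_image_join)
  ultimately have "phi2 g S p0 z - v \<in> \<int>"
    by (simp add: contour_integral_unique)
  then show ?thesis
    using ee_add_Ints[of "phi2 g S p0 z - v" v] by simp
qed

lemma has_field_derivative_ee_phi2:
  assumes S: "open S" "connected S" and g: "g holomorphic_on S" and "p0 \<in> S" "z \<in> S"
    and periods: "\<And>\<gamma>. valid_path \<gamma> \<Longrightarrow> pathfinish \<gamma> = pathstart \<gamma> \<Longrightarrow> path_image \<gamma> \<subseteq> S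
      \<Longrightarrow> contour_integral \<gamma> g \<in> \<int>"
  shows "((\<lambda>z. ee (phi2 g S p0 z)) has_field_derivative
           2 * of_real pi * \<i> * g z * ee (phi2 g S p0 z)) (at z)"
proof -
  obtain r where r: "r > 0" "ball z r \<subseteq> S"
    using S(1) \<open>z \<in> S\<close> openE by blast
  obtain \<Phi> where \<Phi>_within: "\<And>x. x \<in> ball z r \<Longrightarrow> (\<Phi> has_field_derivative g x) (at x within ball z r)"
    using holomorphic_convex_primitive'[OF convex_ball open_ball holomorphic_on_subset[OF g r(2)]]
    by blast
  have \<Phi>: "(\<Phi> has_field_derivative g x) (at x)" if "x \<in> ball z r" for x
    using \<Phi>_within[OF that] at_within_open[OF that open_ball] by simp
  obtain \<gamma>1 where \<gamma>1: "valid_path \<gamma>1" "pathstart \<gamma>1 = p0" "pathfinish \<gamma>1 = z"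
    "path_image \<gamma>1 \<subseteq> S" "(g has_contour_integral phi2 g S p0 z) \<gamma>1"
    using phi2_has_contour_integral[OF S g \<open>p0 \<in> S\<close> \<open>z \<in> S\<close>] by blast
  have local: "ee (phi2 g S p0 w) = ee (phi2 g S p0 z + (\<Phi> w - \<Phi> z))" if w: "w \<in> ball z r" for w
  proof (rule ee_phi2_eq[OF S g \<open>p0 \<in> S\<close> periods])
    have segment: "closed_segment z w \<subseteq> ball z r"
      using w r(1) by (intro closed_segment_subset convex_ball) auto
    have "(g has_contour_integral (\<Phi> w - \<Phi> z)) (linepath z w)"
      using contour_integral_primitive[OF \<Phi>_within valid_path_linepath, of z w] segment by simp
    then show "(g has_contour_integral (phi2 g S p0 z + (\<Phi> w - \<Phi> z))) (\<gamma>1 +++ linepath z w)"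
      using \<gamma>1 by (intro has_contour_integral_join) auto
    show "path_image (\<gamma>1 +++ linepath z w) \<subseteq> S"
      using \<gamma>1 segment r(2) by (auto simp: path_image_join)
  qed (use \<gamma>1 in auto)
  have "((\<lambda>w. ee (phi2 g S p0 z + (\<Phi> w - \<Phi> z))) has_field_derivative
      2 * of_real pi * \<i> * ee (phi2 g S p0 z + (\<Phi> z - \<Phi> z)) * (0 + (g z - 0))) (at z)"
    using r(1) by (intro DERIV_chain2[OF has_field_derivative_ee] DERIV_add DERIV_diff \<Phi> DERIV_const) auto
  then have "((\<lambda>w. ee (phi2 g S p0 z + (\<Phi> w - \<Phi> z))) has_field_derivative
      2 * of_real pi * \<i> * g z * ee (phi2 g S p0 z)) (at z)"
    by (simp add: algebra_simps)
  then show ?thesis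
  proof (rule has_field_derivative_transform_within_open[OF _ open_ball])
    show "z \<in> ball z r"
      using r(1) by simp
    show "ee (phi2 g S p0 z + (\<Phi> w - \<Phi> z)) = ee (phi2 g S p0 w)" if "w \<in> ball z r" for w
      using local[OF that] by simp
  qed
qed

lemma frakT_eq:
  "frakT \<tau> r1 r2 g S p0 c z = theta_char \<tau> 0 0 (z - p0 - fst c) +
     ee (- snd c) * (theta_char \<tau> (- of_real r1) (of_real r2) (z - p0 - fst c) * ee (phi2 g S p0 z))"
  unfolding frakT_def Theta_def by (simp add: ee_add[symmetric] algebra_simps)

lemma h3_cong:
  assumes "ee (- c2) = ee (- c2')"
  shows "h3 \<tau> r1 r2 g S p0 t K (c1, c2) s = h3 \<tau> r1 r2 g S p0 t K (c1, c2') s"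
proof -
  have "frakT \<tau> r1 r2 g S p0 (c1, c2) = frakT \<tau> r1 r2 g S p0 (c1, c2')"
    using assms by (simp add: frakT_eq fun_eq_iff)
  then show ?thesis
    unfolding h3_def by simp
qed

lemma period_group_eq_Ints:
  assumes separates: "\<And>a. a \<notin> \<int> \<Longrightarrow>
    \<exists>c1 c2. h3 \<tau> r1 r2 g S p0 t K (c1, c2 + a) s \<noteq> h3 \<tau> r1 r2 g S p0 t K (c1, c2) s"
  shows "period_group \<tau> r1 r2 g S p0 t K s = {0} \<times> \<int>"
proof (intro set_eqI iffI)
  fix ct :: "complex \<times> complex"
  assume "ct \<in> period_group \<tau> r1 r2 g S p0 t K s"
  then have periodic: "fst ct = 0 \<and> h3 \<tau> r1 r2 g S p0 t K (c1, c2 + snd ct) s = h3 \<tau> r1 r2 g S p0 t K (c1, c2) s"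
    for c1 c2
    unfolding period_group_def dprime_def by (auto dest: spec[of _ "(c1, c2)"])
  show "ct \<in> {0} \<times> \<int>"
    using separates[of "snd ct"] periodic by (cases ct) auto
next
  fix ct :: "complex \<times> complex"
  assume "ct \<in> {0} \<times> \<int>"
  then have "h3 \<tau> r1 r2 g S p0 t K (c1, c2 + snd ct) s = h3 \<tau> r1 r2 g S p0 t K (c1, c2) s" for c1 c2
    by (intro h3_cong) (auto simp: ee_diff_Ints)
  with \<open>ct \<in> {0} \<times> \<int>\<close> show "ct \<in> period_group \<tau> r1 r2 g S p0 t K s"
    unfolding period_group_def dprime_def by auto
qed

section \<open>Local analysis near \<open>P2\<close>\<close>

text \<open>\<open>D\<close> plays the lift of \<open>X\<degree>\<close>, on which the only poles of \<open>g\<close> are \<open>p1, p2\<close>; \<open>U\<close> and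
  \<open>K\<close> play \<open>U2\<close> and its closure, and \<open>Y\<close> is the inverse of the local coordinate \<open>t\<close>.\<close>
locale theta_pole_chart =
  fixes \<tau> :: complex and r1 r2 :: real and g :: "complex \<Rightarrow> complex"
    and D U K :: "complex set" and p0 p1 p2 :: complex and t :: "complex \<Rightarrow> complex"
  assumes tau: "Im \<tau> > 0"
    and D: "open D" "connected D" "simply_connected D"
    and poles: "p1 \<noteq> p2" and base_point: "p0 \<in> D - {p1, p2}"
    and g_holo: "g holomorphic_on D - {p1, p2}"
    and res1: "residue g p1 = 1 / (2 * of_real pi * \<i>)"
    and res2: "residue g p2 = - 1 / (2 * of_real pi * \<i>)"
    and simple_pole: "\<exists>l. ((\<lambda>z. (z - p2) * g z) \<longlongrightarrow> l) (at p2)"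
    and U: "open U" "p2 \<in> U" "U \<subseteq> D - {p1}" "U \<subseteq> K"
    and chart: "t holomorphic_on U" "inj_on t K" "t p2 = 0"
begin

abbreviation S where "S \<equiv> D - {p1, p2}"
abbreviation \<psi> where "\<psi> z \<equiv> ee (phi2 g S p0 z)"
abbreviation H3 where "H3 \<equiv> h3 \<tau> r1 r2 g S p0 t K"
abbreviation Y where "Y \<equiv> inv_into K t"

lemma U_sub_S: "U - {p2} \<subseteq> S"
  using U by auto

lemma psi_has_field_derivative:
  assumes "z \<in> S"
  shows "(\<psi> has_field_derivative 2 * of_real pi * \<i> * g z * \<psi> z) (at z)"
proof (rule has_field_derivative_ee_phi2[OF _ _ g_holo _ assms])
  show "open S"
    using D(1) by auto
  show "connected S"
    using D(1,2) by (intro connected_open_delete_finite) auto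
  show "contour_integral \<gamma> g \<in> \<int>"
    if "valid_path \<gamma>" "pathfinish \<gamma> = pathstart \<gamma>" "path_image \<gamma> \<subseteq> S" for \<gamma>
    using closed_path_integral_in_Ints[OF D poles g_holo res1 res2 that] .
qed (use base_point in simp)

lemma residue_limit_p2: "((\<lambda>z. (z - p2) * g z) \<longlongrightarrow> - 1 / (2 * of_real pi * \<i>)) (at p2)"
proof -
  obtain l where l: "((\<lambda>z. (z - p2) * g z) \<longlongrightarrow> l) (at p2)"
    using simple_pole by blast
  obtain r where "r > 0" "ball p2 r \<subseteq> U"
    using U(1,2) openE by blast
  then have "g holomorphic_on ball p2 r - {p2}"
    using U_sub_S by (blast intro: holomorphic_on_subset[OF g_holo])
  moreover have "((\<lambda>z. g z * (z - p2)) \<longlongrightarrow> l) (at p2)"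
    using l by (simp add: mult.commute)
  ultimately have "residue g p2 = l"
    using \<open>r > 0\<close> by (intro residue_simple'[OF open_ball]) auto
  with l res2 show ?thesis
    by simp
qed

lemma eventually_g_nonzero: "eventually (\<lambda>z. g z \<noteq> 0) (at p2)"
proof -
  have "eventually (\<lambda>z. (z - p2) * g z \<noteq> 0) (at p2)"
    by (rule tendsto_imp_eventually_ne[OF residue_limit_p2]) simp
  then show ?thesis
    by (rule eventually_mono) auto
qed

lemma psi_simple_pole:
  obtains r \<Phi> where "r > 0" "ball p2 r \<subseteq> U" "\<Phi> holomorphic_on ball p2 r"
    "\<And>z. z \<in> ball p2 r \<Longrightarrow> \<Phi> z \<noteq> 0" "\<And>z. z \<in> ball p2 r - {p2} \<Longrightarrow> \<Phi> z = (z - p2) * \<psi> z"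
proof -
  obtain r where r: "r > 0" "ball p2 r \<subseteq> U"
    using U(1,2) openE by blast
  then have sub: "ball p2 r - {p2} \<subseteq> S"
    using U_sub_S by blast
  then have "(\<psi> has_field_derivative 2 * of_real pi * \<i> * g z * \<psi> z) (at z)"
    if "z \<in> ball p2 r - {p2}" for z
    using psi_has_field_derivative that by blast
  from solution_has_simple_pole[OF r(1) holomorphic_on_subset[OF g_holo sub] residue_limit_p2 this
      ee_nonzero] obtain \<Phi> where "\<Phi> holomorphic_on ball p2 r" "\<And>z. z \<in> ball p2 r \<Longrightarrow> \<Phi> z \<noteq> 0"
    "\<And>z. z \<in> ball p2 r - {p2} \<Longrightarrow> \<Phi> z = (z - p2) * \<psi> z"
    by blast
  with r show ?thesis
    by (rule that)
qed

lemmas chart_inverse = holomorphic_inv_into[OF chart(1) U(1) U(4) chart(2)]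

lemma Y_t [simp]: "z \<in> U \<Longrightarrow> Y (t z) = z"
  using U(4) chart(2) by (auto intro: inv_into_f_f)

lemma t_Y [simp]: "y \<in> t ` U \<Longrightarrow> t (Y y) = y"
  using U(4) by (auto intro: f_inv_into_f)

lemma t_eq_0_iff: "z \<in> U \<Longrightarrow> t z = 0 \<longleftrightarrow> z = p2"
  using chart U by (metis inj_onD subsetD)

lemma has_field_derivative_Y: "y \<in> t ` U \<Longrightarrow> (Y has_field_derivative deriv Y y) (at y)"
  using holomorphic_derivI[OF chart_inverse(2) chart_inverse(1), of y UNIV] by simp

lemma h3_at_regular_point:
  assumes "P \<in> U" "P \<noteq> p2" and T': "(frakT \<tau> r1 r2 g S p0 c has_field_derivative T') (at P)"
  shows "H3 c (t P) = deriv Y (t P) * (T' / frakT \<tau> r1 r2 g S p0 c P) + 1 / t P"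
proof -
  have "t P \<in> t ` U" "t P \<noteq> 0"
    using assms t_eq_0_iff by auto
  have "Y (t P) = P"
    using \<open>P \<in> U\<close> by simp
  with T' have "(frakT \<tau> r1 r2 g S p0 c has_field_derivative T') (at (Y (t P)))"
    by simp
  from DERIV_chain2[OF this has_field_derivative_Y[OF \<open>t P \<in> t ` U\<close>]]
  have "deriv (\<lambda>y. frakT \<tau> r1 r2 g S p0 c (Y y)) (t P) = T' * deriv Y (t P)"
    by (rule DERIV_imp_deriv)
  then show ?thesis
    using \<open>t P \<noteq> 0\<close> \<open>Y (t P) = P\<close> unfolding h3_def Let_def by (simp add: mult.commute)
qed

lemma separates_regular:
  assumes P: "P \<in> U" "P \<noteq> p2" and "g P \<noteq> 0" and "a \<notin> \<int>"
  shows "\<exists>c1 c2. H3 (c1, c2 + a) (t P) \<noteq> H3 (c1, c2) (t P)"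
proof -
  define f where "f = theta_char \<tau> 0 0"
  define h where "h = theta_char \<tau> (- of_real r1) (of_real r2)"
  define G where "G = 2 * of_real pi * \<i> * g P"
  have "G \<noteq> 0"
    using \<open>g P \<noteq> 0\<close> by (simp add: G_def)
  then obtain w where w: "deriv f w * h w - f w * deriv h w - G * f w * h w \<noteq> 0"
    using theta_wronskian_nonzero[OF tau, of G "- r1" r2] unfolding f_def h_def of_real_minus by blast
  define c1 where "c1 = P - p0 - w"
  define A where "A z = f (z - p0 - c1)" for z
  define B where "B z = h (z - p0 - c1) * \<psi> z" for z
  have "P - p0 - c1 = w"
    by (simp add: c1_def)
  have shift: "((\<lambda>z. z - p0 - c1) has_field_derivative 1) (at P)"
    by (auto intro!: derivative_eq_intros)
  have A': "(A has_field_derivative deriv f w) (at P)"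
    unfolding A_def using DERIV_chain2[OF entire_has_field_derivative shift] \<open>P - p0 - c1 = w\<close>
    by (simp add: f_def holomorphic_theta_char_00[OF tau])
  have "((\<lambda>z. h (z - p0 - c1)) has_field_derivative deriv h w) (at P)"
    using DERIV_chain2[OF entire_has_field_derivative shift] \<open>P - p0 - c1 = w\<close>
    by (simp add: h_def holomorphic_theta_char[OF tau])
  from DERIV_mult[OF this psi_has_field_derivative]
  have B': "(B has_field_derivative deriv h w * \<psi> P + h w * (G * \<psi> P)) (at P)"
    using P U_sub_S \<open>P - p0 - c1 = w\<close> unfolding B_def G_def by (auto simp: mult_ac)
  have "deriv f w * B P - A P * (deriv h w * \<psi> P + h w * (G * \<psi> P)) =
      \<psi> P * (deriv f w * h w - f w * deriv h w - G * f w * h w)"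
    unfolding A_def B_def \<open>P - p0 - c1 = w\<close> by (simp add: algebra_simps)
  then have W: "deriv f w * B P - A P * (deriv h w * \<psi> P + h w * (G * \<psi> P)) \<noteq> 0"
    using w by simp
  define e where "e = ee (- a)"
  have "e \<noteq> 0" "e \<noteq> 1"
    using \<open>a \<notin> \<int>\<close> unfolding e_def ee_eq_1_iff by auto
  then obtain u where "u \<noteq> 0" and u:
    "(deriv f w + u * (deriv h w * \<psi> P + h w * (G * \<psi> P))) / (A P + u * B P) \<noteq>
     (deriv f w + u * e * (deriv h w * \<psi> P + h w * (G * \<psi> P))) / (A P + u * e * B P)"
    by (rule affine_pencil_log_deriv_separates[OF W])
  have H3_eq: "H3 (c1, c2) (t P) = deriv Y (t P) *
      ((deriv f w + ee (- c2) * (deriv h w * \<psi> P + h w * (G * \<psi> P))) /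
       (A P + ee (- c2) * B P)) + 1 / t P" for c2
  proof -
    have "frakT \<tau> r1 r2 g S p0 (c1, c2) = (\<lambda>z. A z + ee (- c2) * B z)"
      by (simp add: fun_eq_iff frakT_eq A_def B_def f_def h_def)
    with DERIV_add[OF A' DERIV_cmult[OF B', of "ee (- c2)"]] show ?thesis
      using h3_at_regular_point[OF P] by simp
  qed
  define c2 where "c2 = - (Ln u / (2 * of_real pi * \<i>))"
  have "ee (- c2) = u"
    using \<open>u \<noteq> 0\<close> by (simp add: c2_def ee_Ln)
  moreover from this have "ee (- (c2 + a)) = u * e"
    unfolding e_def minus_add_distrib ee_add by simp
  moreover have "deriv Y (t P) \<noteq> 0"
    using P chart_inverse(3) by blast
  ultimately have "H3 (c1, c2 + a) (t P) \<noteq> H3 (c1, c2) (t P)"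
    using u unfolding H3_eq by (metis add_right_cancel mult_cancel_left)
  then show ?thesis
    by blast
qed

lemma psi_chart_simple_pole:
  obtains \<epsilon> B0 where "\<epsilon> > 0" "ball 0 \<epsilon> \<subseteq> t ` U" "B0 holomorphic_on ball 0 \<epsilon>" "B0 0 \<noteq> 0"
    "\<And>y. y \<in> ball 0 \<epsilon> - {0} \<Longrightarrow> \<psi> (Y y) = B0 y / y"
proof -
  obtain r \<Phi> where r: "r > 0" "ball p2 r \<subseteq> U" and \<Phi>: "\<Phi> holomorphic_on ball p2 r"
    "\<And>z. z \<in> ball p2 r \<Longrightarrow> \<Phi> z \<noteq> 0" "\<And>z. z \<in> ball p2 r - {p2} \<Longrightarrow> \<Phi> z = (z - p2) * \<psi> z"
    using psi_simple_pole by blast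
  have "0 \<in> t ` U" "Y 0 = p2"
    using U(2) chart(3) Y_t[of p2] by (auto intro: image_eqI[of 0 t p2])
  define \<zeta> where "\<zeta> = (\<lambda>y. if y = 0 then deriv Y 0 else (Y y - Y 0) / (y - 0))"
  have \<zeta>: "\<zeta> holomorphic_on t ` U"
    unfolding \<zeta>_def using chart_inverse(1,2) \<open>0 \<in> t ` U\<close> by (intro pole_lemma) (auto simp: interior_open)
  have "\<zeta> 0 \<noteq> 0"
    using chart_inverse(3) \<open>0 \<in> t ` U\<close> by (simp add: \<zeta>_def)
  have "open (t ` U \<inter> Y -` ball p2 r)"
    by (rule continuous_open_preimage[OF holomorphic_on_imp_continuous_on[OF chart_inverse(2)]
          chart_inverse(1) open_ball])
  from continuous_open_preimage[OF continuous_on_subset[OF holomorphic_on_imp_continuous_on[OF \<zeta>]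
        Int_lower1] this open_Compl[OF closed_singleton]]
  have "open (t ` U \<inter> Y -` ball p2 r \<inter> \<zeta> -` (- {0}))" .
  moreover have "0 \<in> t ` U \<inter> Y -` ball p2 r \<inter> \<zeta> -` (- {0})"
    using \<open>0 \<in> t ` U\<close> \<open>Y 0 = p2\<close> \<open>\<zeta> 0 \<noteq> 0\<close> r(1) by simp
  ultimately obtain \<epsilon> where "\<epsilon> > 0" and \<epsilon>: "ball 0 \<epsilon> \<subseteq> t ` U \<inter> Y -` ball p2 r \<inter> \<zeta> -` (- {0})"
    by (meson openE)
  show ?thesis
  proof (rule that[of \<epsilon> "\<lambda>y. \<Phi> (Y y) / \<zeta> y"])
    show "\<epsilon> > 0" "ball 0 \<epsilon> \<subseteq> t ` U"
      using \<open>\<epsilon> > 0\<close> \<epsilon> by auto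
    have "(\<Phi> \<circ> Y) holomorphic_on ball 0 \<epsilon>"
      using \<epsilon> by (intro holomorphic_on_compose_gen[OF _ \<Phi>(1)] holomorphic_on_subset[OF chart_inverse(2)])
        auto
    then show "(\<lambda>y. \<Phi> (Y y) / \<zeta> y) holomorphic_on ball 0 \<epsilon>"
      using \<epsilon> by (intro holomorphic_intros holomorphic_on_subset[OF \<zeta>]) (auto simp: o_def)
    show "\<Phi> (Y 0) / \<zeta> 0 \<noteq> 0"
      using \<Phi>(2)[of p2] \<open>Y 0 = p2\<close> \<open>\<zeta> 0 \<noteq> 0\<close> r(1) by simp
    fix y :: complex assume y: "y \<in> ball 0 \<epsilon> - {0}"
    then have "Y y \<in> ball p2 r - {p2}" "y \<in> t ` U"
      using \<epsilon> t_Y chart(3) by auto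
    then show "\<psi> (Y y) = \<Phi> (Y y) / \<zeta> y / y"
      using y \<Phi>(3) \<open>Y 0 = p2\<close> by (simp add: \<zeta>_def)
  qed
qed

lemma separates_at_p2:
  assumes "a \<notin> \<int>"
  shows "\<exists>c1 c2. H3 (c1, c2 + a) 0 \<noteq> H3 (c1, c2) 0"
proof -
  obtain \<epsilon> B0 where "\<epsilon> > 0" and \<epsilon>: "ball 0 \<epsilon> \<subseteq> t ` U" and B0: "B0 holomorphic_on ball 0 \<epsilon>"
    "B0 0 \<noteq> 0" "\<And>y. y \<in> ball 0 \<epsilon> - {0} \<Longrightarrow> \<psi> (Y y) = B0 y / y"
    using psi_chart_simple_pole by blast
  define f where "f = theta_char \<tau> 0 0"
  define h where "h = theta_char \<tau> (- of_real r1) (of_real r2)"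
  obtain w0 where w0: "f w0 \<noteq> 0" "h w0 \<noteq> 0"
    using theta_char_common_nonzero[OF tau] unfolding f_def h_def by blast
  define c1 where "c1 = p2 - p0 - w0"
  define A where "A y = f (Y y - p0 - c1)" for y
  define \<beta> where "\<beta> y = h (Y y - p0 - c1) * B0 y" for y
  have "Y 0 = p2"
    using U(2) chart(3) Y_t[of p2] by simp
  have shift: "(\<lambda>y. Y y - p0 - c1) holomorphic_on ball 0 \<epsilon>"
    using holomorphic_on_subset[OF chart_inverse(2) \<epsilon>] by (intro holomorphic_intros)
  have A: "A holomorphic_on ball 0 \<epsilon>"
    unfolding A_def f_def by (rule holomorphic_on_compose_entire[OF holomorphic_theta_char_00[OF tau] shift])
  have \<beta>: "\<beta> holomorphic_on ball 0 \<epsilon>"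
    unfolding \<beta>_def h_def
    by (intro holomorphic_intros holomorphic_on_compose_entire[OF holomorphic_theta_char[OF tau] shift] B0(1))
  have "\<beta> 0 \<noteq> 0" "A 0 \<noteq> 0"
    using w0 B0(2) \<open>Y 0 = p2\<close> by (simp_all add: \<beta>_def A_def c1_def)
  have H3_eq: "H3 (c1, c2) 0 = (A 0 + ee (- c2) * deriv \<beta> 0) / (ee (- c2) * \<beta> 0)" for c2
  proof -
    have "Lim (at 0) (\<lambda>x. deriv (\<lambda>y. frakT \<tau> r1 r2 g S p0 (c1, c2) (Y y)) x /
        frakT \<tau> r1 r2 g S p0 (c1, c2) (Y x) + 1 / x) = (A 0 + ee (- c2) * deriv \<beta> 0) / (ee (- c2) * \<beta> 0)"
    proof (rule Lim_log_deriv_at_simple_pole[OF open_ball _ A \<beta> \<open>\<beta> 0 \<noteq> 0\<close> ee_nonzero])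
      show "frakT \<tau> r1 r2 g S p0 (c1, c2) (Y y) = A y + ee (- c2) * \<beta> y / y" if "y \<in> ball 0 \<epsilon> - {0}" for y
        using B0(3)[OF that] by (simp add: frakT_eq A_def \<beta>_def f_def h_def)
    qed (use \<open>\<epsilon> > 0\<close> in simp)
    then show ?thesis
      unfolding h3_def Let_def by simp
  qed
  define e where "e = ee (- a)"
  have "e \<noteq> 1"
    using \<open>a \<notin> \<int>\<close> unfolding e_def ee_eq_1_iff by (metis minus_minus Ints_minus)
  have "(A 0 + e * deriv \<beta> 0) / (e * \<beta> 0) \<noteq> (A 0 + 1 * deriv \<beta> 0) / (1 * \<beta> 0)"
  proof
    assume "(A 0 + e * deriv \<beta> 0) / (e * \<beta> 0) = (A 0 + 1 * deriv \<beta> 0) / (1 * \<beta> 0)"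
    then have "A 0 * (1 - e) = 0"
      using \<open>\<beta> 0 \<noteq> 0\<close> by (simp add: e_def field_simps)
    then show False
      using \<open>A 0 \<noteq> 0\<close> \<open>e \<noteq> 1\<close> by simp
  qed
  then have "H3 (c1, 0 + a) 0 \<noteq> H3 (c1, 0) 0"
    unfolding H3_eq by (simp add: e_def)
  then show ?thesis
    by blast
qed

lemma period_group_near_p2:
  obtains \<rho> where "\<rho> > 0" "cball p2 \<rho> \<subseteq> U"
    "\<And>P. P \<in> ball p2 \<rho> \<Longrightarrow> period_group \<tau> r1 r2 g S p0 t K (t P) = {0} \<times> \<int>"
proof -
  obtain \<epsilon> where "\<epsilon> > 0" and \<epsilon>: "\<And>z. z \<noteq> p2 \<Longrightarrow> dist z p2 < \<epsilon> \<Longrightarrow> g z \<noteq> 0"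
    using eventually_g_nonzero unfolding eventually_at by blast
  obtain r where "r > 0" "ball p2 r \<subseteq> U"
    using U(1,2) openE by blast
  define \<rho> where "\<rho> = min \<epsilon> r / 2"
  have "\<rho> > 0" "\<rho> < \<epsilon>" "cball p2 \<rho> \<subseteq> U"
    using \<open>\<epsilon> > 0\<close> \<open>r > 0\<close> \<open>ball p2 r \<subseteq> U\<close> by (auto simp: \<rho>_def min_def)
  moreover have "period_group \<tau> r1 r2 g S p0 t K (t P) = {0} \<times> \<int>" if P: "P \<in> ball p2 \<rho>" for P
  proof (rule period_group_eq_Ints)
    fix a :: complex assume "a \<notin> \<int>"
    show "\<exists>c1 c2. H3 (c1, c2 + a) (t P) \<noteq> H3 (c1, c2) (t P)"
    proof (cases "P = p2")
      case True
      then show ?thesis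
        using separates_at_p2[OF \<open>a \<notin> \<int>\<close>] chart(3) by simp
    next
      case False
      moreover have "P \<in> U" "dist P p2 < \<epsilon>"
        using P \<open>cball p2 \<rho> \<subseteq> U\<close> \<open>\<rho> < \<epsilon>\<close> by (auto simp: dist_commute)
      moreover have "g P \<noteq> 0"
        using \<epsilon> False calculation by blast
      ultimately show ?thesis
        using separates_regular[OF _ _ _ \<open>a \<notin> \<int>\<close>] by blast
    qed
  qed
  ultimately show ?thesis
    using that by blast
qed

end

lemma zero_in_lattice: "0 \<in> lattice \<tau>"
  unfolding lattice_def by (auto intro!: exI[of _ 0])

lemma Diff_pole_set_eq:
  assumes inj: "\<And>z w. z \<in> D \<Longrightarrow> w \<in> D \<Longrightarrow> z - w \<in> lattice \<tau> \<Longrightarrow> z = w"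
    and "p1 \<in> D" "p2 \<in> D"
  shows "D - pole_set \<tau> p1 p2 = D - {p1, p2}"
proof -
  have "z \<in> pole_set \<tau> p1 p2 \<longleftrightarrow> z = p1 \<or> z = p2" if "z \<in> D" for z
  proof
    assume "z \<in> pole_set \<tau> p1 p2"
    then obtain l where "l \<in> lattice \<tau>" "z = p1 + l \<or> z = p2 + l"
      unfolding pole_set_def by blast
    then show "z = p1 \<or> z = p2"
      using inj[OF that \<open>p1 \<in> D\<close>] inj[OF that \<open>p2 \<in> D\<close>] by auto
  next
    assume "z = p1 \<or> z = p2"
    then show "z \<in> pole_set \<tau> p1 p2"
      unfolding pole_set_def using zero_in_lattice by force
  qed
  then show ?thesis
    by blast
qed

theorem lemma6p1:
  fixes \<tau> p0 p1 p2 :: complex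
    and g t :: "complex \<Rightarrow> complex"
    and \<alpha> \<beta> :: "real \<Rightarrow> complex"
    and r1 r2 :: real
    and D U2 V :: "complex set"
  assumes tau: "Im \<tau> > 0"
    and distinct: "p1 - p2 \<notin> lattice \<tau>"
    \<comment> \<open>rho^* eta = g dz: a doubly periodic meromorphic differential\<close>
    and g_hol: "g holomorphic_on (- pole_set \<tau> p1 p2)"
    and g_per: "\<And>z. z \<notin> pole_set \<tau> p1 p2 \<Longrightarrow> g (z + 1) = g z \<and> g (z + \<tau>) = g z"
    and g_simple1: "\<exists>l. ((\<lambda>z. (z - p1) * g z) \<longlongrightarrow> l) (at p1)"
    and g_simple2: "\<exists>l. ((\<lambda>z. (z - p2) * g z) \<longlongrightarrow> l) (at p2)"
    and g_res1: "residue g p1 = 1 / (2 * of_real pi * \<i>)"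
    and g_res2: "residue g p2 = - residue g p1"
    \<comment> \<open>canonical homology basis alpha, beta (lifted), avoiding P1, P2\<close>
    and alpha: "valid_path \<alpha>" "pathfinish \<alpha> = pathstart \<alpha> + 1"
    and beta: "valid_path \<beta>" "pathfinish \<beta> = pathstart \<beta> + \<tau>"
    and meet: "pathstart \<alpha> = pathstart \<beta>"
    and avoid: "(path_image \<alpha> \<union> path_image \<beta>) \<inter> pole_set \<tau> p1 p2 = {}"
    and per_alpha: "(g has_contour_integral (of_real r1)) \<alpha>"
    and per_beta: "(g has_contour_integral (of_real r2)) \<beta>"
    \<comment> \<open>X-circ: lift D of the domain obtained by cutting along alpha, beta\<close>
    and D_comp: "D \<in> components (- cut_set \<tau> \<alpha> \<beta>)"
    and D_sc: "simply_connected D"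
    and D_inj: "\<And>z w. z \<in> D \<Longrightarrow> w \<in> D \<Longrightarrow> z - w \<in> lattice \<tau> \<Longrightarrow> z = w"
    and pts: "p1 \<in> D" "p2 \<in> D" "p0 \<in> D" "p0 \<noteq> p1" "p0 \<noteq> p2"
    \<comment> \<open>U2: small disk around P2 in X-circ, t a local coordinate on its closure\<close>
    and U2: "open U2" "connected U2" "bounded U2" "p2 \<in> U2" "closure U2 \<subseteq> D" "p1 \<notin> closure U2"
    and V: "open V" "closure U2 \<subseteq> V" "V \<subseteq> D" "t holomorphic_on V" "inj_on t V"
    and t0: "t p2 = 0"
  shows "\<exists>U20. open U20 \<and> p2 \<in> U20 \<and> compact (closure U20) \<and> closure U20 \<subseteq> U2 \<and>
           (\<forall>P\<in>U20. period_group \<tau> r1 r2 g (D - pole_set \<tau> p1 p2) p0 t (closure U2) (t P)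
                       = {0} \<times> \<int>)"
proof -
  have "p1 \<noteq> p2"
    using distinct zero_in_lattice by auto
  have "open D"
    using open_components[OF open_Compl[OF cut_set_closed[OF tau alpha(1) beta(1)]] D_comp] .
  have "connected D"
    using in_components_connected[OF D_comp] .
  have S: "D - pole_set \<tau> p1 p2 = D - {p1, p2}"
    using Diff_pole_set_eq[OF D_inj pts(1,2)] .
  interpret theta_pole_chart \<tau> r1 r2 g D U2 "closure U2" p0 p1 p2 t
  proof
    show "g holomorphic_on D - {p1, p2}"
      using holomorphic_on_subset[OF g_hol] S by blast
    show "residue g p2 = - 1 / (2 * of_real pi * \<i>)"
      using g_res1 g_res2 by simp
    show "U2 \<subseteq> D - {p1}" "U2 \<subseteq> closure U2"
      using U2(5,6) closure_subset by blast+
    show "t holomorphic_on U2" "inj_on t (closure U2)"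
      using V(2,4,5) closure_subset by (blast intro: holomorphic_on_subset inj_on_subset)+
  qed (use tau \<open>open D\<close> \<open>connected D\<close> D_sc \<open>p1 \<noteq> p2\<close> pts g_simple2 g_res1 U2 t0 in auto)
  obtain \<rho> where "\<rho> > 0" "cball p2 \<rho> \<subseteq> U2"
    "\<And>P. P \<in> ball p2 \<rho> \<Longrightarrow> period_group \<tau> r1 r2 g (D - {p1, p2}) p0 t (closure U2) (t P) = {0} \<times> \<int>"
    using period_group_near_p2 by blast
  then show ?thesis
    unfolding S by (intro exI[of _ "ball p2 \<rho>"]) auto
qed

end
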